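(* Let $\mu>0$, $\alpha>0$, $f(x)=xe^{-x}$ for $x\ge 0$, and let $\beta\in L^\infty_+(0,+\infty)$ satisfy $\int_0^{\infty}\beta(a)e^{-\mu a}\,da=1$. Let $u_0\in L^1_+((0,+\infty),\mathbb{R})$, set $U_0=\int_0^\infty u_0(a)\,da$ and $\Lambda=\frac{\alpha}{\mu}\sup_{x\ge 0}f(x)$. Let $u(t,a)$ be the solution of $$\partial_t u+\partial_a u=-\mu u\ (t>0,a>0),\qquad u(t,0)=\alpha f\Big(\int_0^\infty\beta(a)u(t,a)\,da\Big)\ (t>0),\qquad u(0,\cdot)=u_0,$$ and for $\delta_+=1$ and $\delta_-=e^{-\|\beta\|_{L^\infty}\max(U_0,\Lambda)}$ let $u_\pm(t,a)$ be the solutions of the linear problems $$\partial_t u_\pm+\partial_a u_\pm=-\mu u_\pm\ (a\ge 0,t\ge 0),\qquad u_\pm(t,0)=\alpha\delta_\pm\int_0^{\infty}\beta(a)u_\pm(t,a)\,da,\qquad u_\pm(0,\cdot)=u_0.$$ Then $u_-(t,a)\le u(t,a)\le u_+(t,a)$ for all $t\ge 0$ and almost every $a\ge 0$.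
   Context: Solutions are understood in the integrated (along characteristics) sense: $u(t,a)=e^{-\mu t}u_0(a-t)$ if $a\ge t$ and $u(t,a)=e^{-\mu a}b(t-a)$ if $a\le t$, where $b$ is the unique continuous solution of the Volterra equation $b(t)=\alpha f\big(\int_t^\infty\beta(a)e^{-\mu t}u_0(a-t)\,da+\int_0^t\beta(a)e^{-\mu a}b(t-a)\,da\big)$, $t\ge 0$. The linear problems are solved in the same way with $\alpha f(\cdot)$ replaced by $\alpha\delta_\pm\,(\cdot)$. *)

theory Defs
  imports "HOL-Analysis.Analysis"
begin

definition f_ricker :: "real \<Rightarrow> real" where
  "f_ricker x = x * exp (- x)"

definition Linf_norm :: "(real \<Rightarrow> real) \<Rightarrow> real" where
  "Linf_norm g = Inf {C. AE a in lborel. a > 0 \<longrightarrow> \<bar>g a\<bar> \<le> C}"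

text \<open>The argument of the boundary condition, expressed via the birth rate b
  (integrated along characteristics).\<close>
definition birth_input ::
  "(real \<Rightarrow> real) \<Rightarrow> real \<Rightarrow> (real \<Rightarrow> real) \<Rightarrow> (real \<Rightarrow> real) \<Rightarrow> real \<Rightarrow> real" where
  "birth_input \<beta> \<mu> u0 b t =
     (LINT a:{t..}|lborel. \<beta> a * exp (- \<mu> * t) * u0 (a - t))
   + (LINT a:{0..t}|lborel. \<beta> a * exp (- \<mu> * a) * b (t - a))"

definition is_birth_rate ::
  "(real \<Rightarrow> real) \<Rightarrow> real \<Rightarrow> (real \<Rightarrow> real) \<Rightarrow> (real \<Rightarrow> real) \<Rightarrow> (real \<Rightarrow> real) \<Rightarrow> bool" where
  "is_birth_rate G \<mu> \<beta> u0 b \<longleftrightarrow>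
     continuous_on {0..} b \<and> (\<forall>t\<ge>0. b t = G (birth_input \<beta> \<mu> u0 b t))"

definition age_sol ::
  "real \<Rightarrow> (real \<Rightarrow> real) \<Rightarrow> (real \<Rightarrow> real) \<Rightarrow> real \<Rightarrow> real \<Rightarrow> real" where
  "age_sol \<mu> u0 b t a =
     (if a \<ge> t then exp (- \<mu> * t) * u0 (a - t) else exp (- \<mu> * a) * b (t - a))"

end

theory Submission
  imports Defs
begin

text \<open>All three birth rates solve Volterra equations b = G (J + k * b) with the same kernel
  k a = \<beta> a exp (- \<mu> a), the same nonnegative input J coming from u0, and G x = \<alpha> f x,
  \<alpha> x and \<alpha> \<delta> x respectively; along characteristics u is monotone in b. A Gronwall
  argument for the positive part of p - q gives a comparison principle: if
  p - q \<le> L (k * p - k * q) wherever p > q, then p \<le> q. Since f x \<le> x this yields b \<le> bp.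
  Comparing with 0 shows b \<ge> 0, hence b \<le> \<alpha> sup f, and then the argument x = J + k * b of f
  stays in [0, R] with R = Linf_norm \<beta> * max U0 \<Lambda> and \<delta> = exp (- R), where
  f x = x exp (- x) \<ge> \<delta> x; this gives bm \<le> b.\<close>

section \<open>Lebesgue measure on the half line\<close>

lemma set_integral_exp_neg_Icc:
  fixes c t :: real
  assumes "c > 0" and "t \<ge> 0"
  shows "(LINT a:{0..t}|lborel. exp (- c * a)) = (1 - exp (- c * t)) / c"
proof -
  have "(LINT a:{0..t}|lborel. exp (- c * a)) = - exp (- c * t) / c - (- exp (- c * 0) / c)"
    unfolding set_lebesgue_integral_def
    using assms
    by (intro integral_FTC_atLeastAtMost)
       (auto intro!: derivative_eq_intros continuous_intros
             simp: has_real_derivative_iff_has_vector_derivative[symmetric])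
  then show ?thesis
    by (simp add: diff_divide_distrib)
qed

lemma AE_lborel_translate:
  fixes t :: real
  assumes "AE x in lborel. P x"
  shows "AE x in lborel. P (x - t)"
proof -
  obtain N where N: "{x \<in> space lborel. \<not> P x} \<subseteq> N" "emeasure lborel N = 0" "N \<in> sets lborel"
    using assms by (auto elim!: AE_E)
  show ?thesis
    by (rule AE_I'[OF null_sets_translation[of N t]]) (use N in auto)
qed

lemma set_integral_translate_Ioi:
  fixes u :: "real \<Rightarrow> real" and t :: real
  assumes u: "set_integrable lborel {0<..} u"
  shows "set_integrable lborel {t..} (\<lambda>a. u (a - t))"
    and "(LINT a:{t..}|lborel. u (a - t)) = (LINT a:{0<..}|lborel. u a)"
proof -
  define f where "f x = indicator {0..} x *\<^sub>R u x" for x :: real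
  define g where "g x = indicator {0<..} x *\<^sub>R u x" for x :: real
  have gi: "integrable lborel g" using u unfolding set_integrable_def g_def .
  have gm: "g \<in> borel_measurable lborel" using borel_measurable_integrable[OF gi] .
  have "f = (\<lambda>x. g x + indicator {0} x * u 0)"
    by (auto simp: f_def g_def indicator_def fun_eq_iff)
  then have fm: "f \<in> borel_measurable lborel"
    using gm by simp
  have ae: "AE x in lborel. g x = f x"
    using AE_lborel_singleton[of 0] by eventually_elim (auto simp: f_def g_def indicator_def)
  have fi: "integrable lborel f" by (rule integrable_cong_AE_imp[OF gi fm ae])
  have fg: "integral\<^sup>L lborel f = integral\<^sup>L lborel g"
    by (rule integral_cong_AE[OF fm gm]) (use ae in \<open>eventually_elim, simp\<close>)
  have shift: "(\<lambda>x. f (- t + 1 * x)) = (\<lambda>x. indicator {t..} x *\<^sub>R u (x - t))"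
    by (auto simp: f_def indicator_def fun_eq_iff)
  show "set_integrable lborel {t..} (\<lambda>a. u (a - t))"
    unfolding set_integrable_def shift[symmetric]
    using lborel_integrable_real_affine_iff[of 1 f "- t"] fi by simp
  have "(LINT a:{t..}|lborel. u (a - t)) = integral\<^sup>L lborel (\<lambda>x. f (- t + 1 * x))"
    unfolding set_lebesgue_integral_def shift by simp
  also have "\<dots> = integral\<^sup>L lborel f"
    using lborel_integral_real_affine[of 1 f "- t"] by simp
  finally show "(LINT a:{t..}|lborel. u (a - t)) = (LINT a:{0<..}|lborel. u a)"
    unfolding fg set_lebesgue_integral_def g_def .
qed

lemma not_AE_lborel_nonpos: "\<not> (AE a in lborel. (a::real) \<le> 0)"
proof
  assume "AE a in lborel. (a::real) \<le> 0"
  then obtain N where N: "{x \<in> space lborel. \<not> x \<le> (0::real)} \<subseteq> N" "emeasure lborel N = 0" "N \<in> sets lborel"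
    by (auto elim!: AE_E)
  then have "emeasure lborel {0<..1::real} \<le> emeasure lborel N"
    by (intro emeasure_mono) auto
  then show False using N(2) by simp
qed

lemma essential_bound_nonneg:
  fixes g :: "real \<Rightarrow> real"
  assumes "AE a in lborel. a > 0 \<longrightarrow> \<bar>g a\<bar> \<le> c"
  shows "0 \<le> c"
proof (rule ccontr)
  assume "\<not> 0 \<le> c"
  from assms have "AE a in lborel. (a::real) \<le> 0"
    by eventually_elim (use \<open>\<not> 0 \<le> c\<close> in auto)
  then show False using not_AE_lborel_nonpos by simp
qed

lemma Linf_norm_nonneg:
  assumes "\<exists>C. AE a in lborel. a > 0 \<longrightarrow> \<bar>g a\<bar> \<le> C"
  shows "0 \<le> Linf_norm g"
  unfolding Linf_norm_def using assms by (intro cInf_greatest) (auto intro: essential_bound_nonneg)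

lemma AE_abs_le_Linf_norm:
  assumes "\<exists>C. AE a in lborel. a > 0 \<longrightarrow> \<bar>g a\<bar> \<le> C"
  shows "AE a in lborel. a > 0 \<longrightarrow> \<bar>g a\<bar> \<le> Linf_norm g"
proof -
  define A where "A = {C. AE a in lborel. a > 0 \<longrightarrow> \<bar>g a\<bar> \<le> C}"
  have norm_eq: "Linf_norm g = Inf A" by (simp add: Linf_norm_def A_def)
  have ne: "A \<noteq> {}" using assms by (auto simp: A_def)
  have bdd: "bdd_below A" by (rule bdd_belowI[of _ 0]) (auto simp: A_def intro: essential_bound_nonneg)
  have "AE a in lborel. a > 0 \<longrightarrow> \<bar>g a\<bar> \<le> Inf A + inverse (real (Suc n))" for n
  proof -
    have "Inf A < Inf A + inverse (real (Suc n))" by simp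
    then obtain c where "c \<in> A" "c < Inf A + inverse (real (Suc n))"
      using cInf_less_iff[OF ne bdd] by blast
    then show ?thesis unfolding A_def by (auto elim!: eventually_mono)
  qed
  then have "AE a in lborel. \<forall>n. a > 0 \<longrightarrow> \<bar>g a\<bar> \<le> Inf A + inverse (real (Suc n))"
    by (subst AE_all_countable) auto
  then show ?thesis
  proof eventually_elim
    case (elim a)
    show ?case
    proof (intro impI leI notI)
      assume "a > 0" and "Linf_norm g < \<bar>g a\<bar>"
      then obtain n where "inverse (real (Suc n)) < \<bar>g a\<bar> - Inf A"
        using reals_Archimedean unfolding norm_eq by (metis diff_gt_0_iff_gt)
      moreover have "\<bar>g a\<bar> \<le> Inf A + inverse (real (Suc n))" using elim \<open>a > 0\<close> by blast
      ultimately show False by linarith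
    qed
  qed
qed

lemma f_ricker_le_id: "f_ricker x \<le> x"
proof (cases "x \<ge> 0")
  case True
  then show ?thesis unfolding f_ricker_def by (intro mult_left_le) auto
next
  case False
  then have "x * exp (- x) \<le> x * 1" by (intro mult_left_mono_neg) auto
  then show ?thesis by (simp add: f_ricker_def)
qed

lemma f_ricker_le_1: "f_ricker x \<le> 1"
proof -
  have "x \<le> exp x" using exp_ge_add_one_self[of x] by linarith
  then show ?thesis by (simp add: f_ricker_def exp_minus field_simps)
qed

lemma f_ricker_le_Sup: "x \<ge> 0 \<Longrightarrow> f_ricker x \<le> (SUP y\<in>{0..}. f_ricker y)"
  by (rule cSUP_upper) (auto intro!: bdd_aboveI2[where M = 1] f_ricker_le_1)

lemma f_ricker_neg_iff: "f_ricker x < 0 \<longleftrightarrow> x < 0"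
  by (simp add: f_ricker_def mult_less_0_iff)

lemma f_ricker_ge_on_Icc:
  assumes "0 \<le> x" and "x \<le> R"
  shows "exp (- R) * x \<le> f_ricker x"
  using assms by (simp add: f_ricker_def mult.commute mult_left_mono)

lemma f_ricker_neg_le:
  assumes "x \<le> 0" and "- x \<le> M"
  shows "- f_ricker x \<le> exp M * (- x)"
proof -
  have "exp (- x) \<le> exp M" using assms(2) by simp
  then have "x * exp M \<le> x * exp (- x)" using assms(1) by (rule mult_left_mono_neg)
  then show ?thesis by (simp add: f_ricker_def mult.commute)
qed

section \<open>Volterra convolution with a bounded kernel\<close>

definition volterra_conv :: "(real \<Rightarrow> real) \<Rightarrow> (real \<Rightarrow> real) \<Rightarrow> real \<Rightarrow> real" where
  "volterra_conv k g t = (LINT a:{0..t}|lborel. k a * g (t - a))"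

lemma volterra_conv_zero [simp]: "volterra_conv k (\<lambda>_. 0) t = 0"
  by (simp add: volterra_conv_def)

locale bounded_kernel =
  fixes k :: "real \<Rightarrow> real" and C :: real
  assumes kernel_measurable: "k \<in> borel_measurable lborel"
    and kernel_bounds: "AE a in lborel. a > 0 \<longrightarrow> 0 \<le> k a \<and> k a \<le> C"
begin

lemma bound_nonneg: "0 \<le> C"
proof (rule ccontr)
  assume "\<not> 0 \<le> C"
  from kernel_bounds have "AE a in lborel. (a::real) \<le> 0"
    by eventually_elim (use \<open>\<not> 0 \<le> C\<close> in auto)
  then show False using not_AE_lborel_nonpos by simp
qed

lemma AE_abs_kernel_mult_le:
  "AE a in lborel. a > 0 \<longrightarrow> (\<forall>y. \<bar>y\<bar> \<le> B \<longrightarrow> \<bar>k a * y\<bar> \<le> C * B)"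
  using kernel_bounds by eventually_elim (auto simp: abs_mult intro!: mult_mono)

lemma conv_integrable:
  assumes g: "continuous_on {0..t} g"
  shows "set_integrable lborel {0..t} (\<lambda>a. k a * g (t - a))"
proof -
  have h: "continuous_on {0..t} (\<lambda>a. g (t - a))"
    by (rule continuous_on_compose2[OF g]) (auto intro!: continuous_intros)
  obtain B where "\<forall>y\<in>(\<lambda>a. g (t - a)) ` {0..t}. norm y \<le> B"
    using compact_imp_bounded[OF compact_continuous_image[OF h compact_Icc]]
    unfolding bounded_iff by blast
  then have B: "\<And>a. a \<in> {0..t} \<Longrightarrow> \<bar>g (t - a)\<bar> \<le> B" by auto
  show ?thesis
  proof (rule set_integrable_bound[where f = "\<lambda>_. C * B"])
    show "set_integrable lborel {0..t} (\<lambda>_. C * B)"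
      by (rule borel_integrable_atLeastAtMost') simp
    have "(\<lambda>x. indicator {0..t} x *\<^sub>R g (t - x)) \<in> borel_measurable borel"
      by (rule borel_measurable_continuous_on_indicator[OF _ h]) simp
    then have "(\<lambda>x. k x * (indicator {0..t} x *\<^sub>R g (t - x))) \<in> borel_measurable lborel"
      using kernel_measurable by measurable
    then show "set_borel_measurable lborel {0..t} (\<lambda>a. k a * g (t - a))"
      unfolding set_borel_measurable_def by (simp add: mult.left_commute)
    show "AE x in lborel. x \<in> {0..t} \<longrightarrow> norm (k x * g (t - x)) \<le> norm (C * B)"
      using AE_lborel_singleton[of 0] AE_abs_kernel_mult_le[of B]
    proof eventually_elim
      case (elim a)
      show ?case
        using elim B[of a] by auto
    qed
  qed
qed

lemma conv_le_set_integral: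
  assumes g: "continuous_on {0..t} g" and F: "set_integrable lborel {0..t} F"
    and le: "AE a in lborel. 0 < a \<and> a \<le> t \<longrightarrow> k a * g (t - a) \<le> F a"
  shows "volterra_conv k g t \<le> (LINT a:{0..t}|lborel. F a)"
  unfolding volterra_conv_def
proof (rule set_integral_mono_AE[OF conv_integrable[OF g] F])
  show "AE a\<in>{0..t} in lborel. k a * g (t - a) \<le> F a"
    using le AE_lborel_singleton[of 0] by eventually_elim auto
qed

lemma conv_mono:
  assumes g1: "continuous_on {0..t} g1" and g2: "continuous_on {0..t} g2"
    and le: "\<And>s. s \<in> {0..t} \<Longrightarrow> g1 s \<le> g2 s"
  shows "volterra_conv k g1 t \<le> volterra_conv k g2 t"
  unfolding volterra_conv_def[of k g2]
proof (rule conv_le_set_integral[OF g1 conv_integrable[OF g2]])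
  show "AE a in lborel. 0 < a \<and> a \<le> t \<longrightarrow> k a * g1 (t - a) \<le> k a * g2 (t - a)"
    using kernel_bounds by eventually_elim (auto intro!: mult_left_mono le)
qed

lemma conv_nonneg:
  assumes "continuous_on {0..t} g" and "\<And>s. s \<in> {0..t} \<Longrightarrow> 0 \<le> g s"
  shows "0 \<le> volterra_conv k g t"
  using conv_mono[OF continuous_on_const[of _ 0] assms] by simp

lemma conv_diff:
  assumes "continuous_on {0..t} p" and "continuous_on {0..t} q"
  shows "volterra_conv k (\<lambda>s. p s - q s) t = volterra_conv k p t - volterra_conv k q t"
  unfolding volterra_conv_def
  by (simp add: right_diff_distrib
        set_integral_diff(2)[OF conv_integrable[OF assms(1)] conv_integrable[OF assms(2)]])

lemma abs_conv_le:
  assumes g: "continuous_on {0..t} g" and B: "\<And>s. s \<in> {0..t} \<Longrightarrow> \<bar>g s\<bar> \<le> B" and t: "t \<ge> 0"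
  shows "\<bar>volterra_conv k g t\<bar> \<le> C * B * t"
proof -
  have "\<bar>volterra_conv k g t\<bar> \<le> (LINT a:{0..t}|lborel. \<bar>k a * g (t - a)\<bar>)"
    using set_integral_norm_bound[OF conv_integrable[OF g]] by (simp add: volterra_conv_def)
  also have "\<dots> \<le> (LINT a:{0..t}|lborel. C * B)"
  proof (rule set_integral_mono_AE[OF set_integrable_abs[OF conv_integrable[OF g]]])
    show "set_integrable lborel {0..t} (\<lambda>_. C * B)"
      by (rule borel_integrable_atLeastAtMost') simp
    show "AE a\<in>{0..t} in lborel. \<bar>k a * g (t - a)\<bar> \<le> C * B"
      using AE_abs_kernel_mult_le[of B] AE_lborel_singleton[of 0]
    proof eventually_elim
      case (elim a)
      show ?case
        using elim B[of "t - a"] by auto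
    qed
  qed
  also have "\<dots> = C * B * t"
    using t by (simp add: set_integral_const)
  finally show ?thesis .
qed

lemma conv_le_of_exp_growth:
  assumes g: "g > 0" and M: "M \<ge> 0" and t: "t \<ge> 0" and w: "continuous_on {0..t} w"
    and w_bounds: "\<And>s. s \<in> {0..t} \<Longrightarrow> 0 \<le> w s \<and> w s \<le> M * exp (g * s)"
  shows "volterra_conv k w t \<le> C * M * exp (g * t) / g"
proof -
  have "volterra_conv k w t \<le> (LINT a:{0..t}|lborel. C * M * exp (g * t) * exp (- g * a))"
  proof (rule conv_le_set_integral[OF w])
    show "set_integrable lborel {0..t} (\<lambda>a. C * M * exp (g * t) * exp (- g * a))"
      by (rule borel_integrable_atLeastAtMost') (intro continuous_intros)
    show "AE a in lborel. 0 < a \<and> a \<le> t \<longrightarrow> k a * w (t - a) \<le> C * M * exp (g * t) * exp (- g * a)"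
      using kernel_bounds
    proof eventually_elim
      case (elim a)
      show ?case
      proof
        assume a: "0 < a \<and> a \<le> t"
        then have "k a * w (t - a) \<le> C * (M * exp (g * (t - a)))"
          using elim w_bounds[of "t - a"] by (intro mult_mono) auto
        also have "\<dots> = C * M * exp (g * t) * exp (- g * a)"
          by (simp add: algebra_simps flip: exp_add)
        finally show "k a * w (t - a) \<le> C * M * exp (g * t) * exp (- g * a)" .
      qed
    qed
  qed
  also have "\<dots> = C * M * exp (g * t) * ((1 - exp (- g * t)) / g)"
    using set_integral_exp_neg_Icc[OF g t] by simp
  also have "\<dots> \<le> C * M * exp (g * t) * (1 / g)"
    using bound_nonneg M g by (intro mult_left_mono divide_right_mono) auto
  finally show ?thesis by simp
qed

text \<open>Weighting w by exp (- g t) with g > L C turns the hypothesis into M \<le> (L C / g) M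
  for the maximum M of the weighted function.\<close>
lemma volterra_gronwall:
  assumes L: "L \<ge> 0" and w: "continuous_on {0..T} w" and w_nonneg: "\<And>t. t \<in> {0..T} \<Longrightarrow> 0 \<le> w t"
    and ineq: "\<And>t. t \<in> {0..T} \<Longrightarrow> w t \<le> L * volterra_conv k w t"
    and s: "s \<in> {0..T}"
  shows "w s = 0"
proof -
  define g where "g = L * C + 1"
  have g: "g > 0" using L bound_nonneg by (simp add: g_def add_nonneg_pos)
  define v where "v t = exp (- g * t) * w t" for t
  have "continuous_on {0..T} v" unfolding v_def by (intro continuous_intros w)
  moreover have "{0..T} \<noteq> {}" using s by auto
  ultimately obtain t0 where t0: "t0 \<in> {0..T}" and max: "\<And>y. y \<in> {0..T} \<Longrightarrow> v y \<le> v t0"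
    using continuous_attains_sup[OF compact_Icc] by blast
  define M where "M = v t0"
  have M: "M \<ge> 0" using w_nonneg[OF t0] by (simp add: M_def v_def)
  have w_le: "w y \<le> M * exp (g * y)" if "y \<in> {0..T}" for y
  proof -
    have "w y = exp (g * y) * v y" by (simp add: v_def flip: exp_minus_inverse exp_add)
    also have "\<dots> \<le> exp (g * y) * M" using max[OF that] by (simp add: M_def)
    finally show ?thesis by (simp add: mult.commute)
  qed
  have "volterra_conv k w t0 \<le> C * M * exp (g * t0) / g"
    using t0 w_nonneg w_le
    by (intro conv_le_of_exp_growth[OF g M] continuous_on_subset[OF w]) auto
  then have "w t0 \<le> L * (C * M * exp (g * t0) / g)"
    using ineq[OF t0] L by (meson mult_left_mono order_trans)
  then have "M \<le> exp (- g * t0) * (L * (C * M * exp (g * t0) / g))"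
    unfolding M_def v_def by (rule mult_left_mono) simp
  also have "\<dots> = L * C * M / g"
    by (simp add: field_simps flip: exp_minus_inverse exp_add)
  finally have "M * g \<le> L * C * M"
    using g by (simp add: field_simps)
  then have "M \<le> 0"
    by (simp add: g_def algebra_simps)
  then show ?thesis
    using w_le[OF s] w_nonneg[OF s] by (smt (verit) exp_gt_zero mult_nonpos_nonneg)
qed

lemma volterra_comparison:
  assumes L: "L \<ge> 0" and p: "continuous_on {0..T} p" and q: "continuous_on {0..T} q"
    and ineq: "\<And>t. t \<in> {0..T} \<Longrightarrow> q t < p t \<Longrightarrow>
        p t - q t \<le> L * (volterra_conv k p t - volterra_conv k q t)"
    and s: "s \<in> {0..T}"
  shows "p s \<le> q s"
proof -
  define w where "w t = max (p t - q t) 0" for t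
  have w: "continuous_on {0..T} w" unfolding w_def by (intro continuous_intros p q)
  have "w s = 0"
  proof (rule volterra_gronwall[OF L w _ _ s])
    show "0 \<le> w t" for t by (simp add: w_def)
    fix t assume t: "t \<in> {0..T}"
    have sub: "{0..t} \<subseteq> {0..T}" using t by auto
    note cont = continuous_on_subset[OF p sub] continuous_on_subset[OF q sub] continuous_on_subset[OF w sub]
    have w_conv_nonneg: "0 \<le> volterra_conv k w t"
      by (rule conv_nonneg[OF cont(3)]) (simp add: w_def)
    show "w t \<le> L * volterra_conv k w t"
    proof (cases "q t < p t")
      case False
      then show ?thesis using w_conv_nonneg L by (simp add: w_def)
    next
      case True
      have "volterra_conv k p t - volterra_conv k q t = volterra_conv k (\<lambda>s. p s - q s) t"
        by (rule conv_diff[OF cont(1,2), symmetric])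
      also have "\<dots> \<le> volterra_conv k w t"
        by (rule conv_mono) (auto intro!: continuous_intros cont simp: w_def)
      finally show ?thesis
        using ineq[OF t True] True L by (simp add: w_def) (smt (verit) mult_left_mono)
    qed
  qed
  then show ?thesis by (simp add: w_def)
qed

end

section \<open>The age-structured Ricker model\<close>

definition initial_input :: "(real \<Rightarrow> real) \<Rightarrow> real \<Rightarrow> (real \<Rightarrow> real) \<Rightarrow> real \<Rightarrow> real" where
  "initial_input \<beta> \<mu> u0 t = (LINT a:{t..}|lborel. \<beta> a * exp (- \<mu> * t) * u0 (a - t))"

lemma is_birth_rateD:
  assumes "is_birth_rate G \<mu> \<beta> u0 b"
  shows "\<And>t. continuous_on {0..t} b"
    and "\<And>t. t \<ge> 0 \<Longrightarrow>
      b t = G (initial_input \<beta> \<mu> u0 t + volterra_conv (\<lambda>a. \<beta> a * exp (- \<mu> * a)) b t)"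
  using assms continuous_on_subset[of "{0..}" b]
  by (auto simp: is_birth_rate_def birth_input_def initial_input_def volterra_conv_def)

lemma age_sol_mono:
  assumes "\<And>s. s \<ge> 0 \<Longrightarrow> b1 s \<le> b2 s"
  shows "age_sol \<mu> u0 b1 t a \<le> age_sol \<mu> u0 b2 t a"
  using assms[of "t - a"] by (auto simp: age_sol_def intro!: mult_left_mono)

locale ricker_model =
  fixes \<mu> \<alpha> :: real and \<beta> u0 :: "real \<Rightarrow> real"
  assumes mu_pos: "\<mu> > 0" and alpha_pos: "\<alpha> > 0"
    and beta_meas: "\<beta> \<in> borel_measurable lborel"
    and beta_nonneg: "AE a in lborel. a > 0 \<longrightarrow> \<beta> a \<ge> 0"
    and beta_bdd: "\<exists>C. AE a in lborel. a > 0 \<longrightarrow> \<bar>\<beta> a\<bar> \<le> C"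
    and u0_int: "set_integrable lborel {0<..} u0"
    and u0_nonneg: "AE a in lborel. a > 0 \<longrightarrow> u0 a \<ge> 0"
begin

abbreviation "input \<equiv> initial_input \<beta> \<mu> u0"
abbreviation "initial_mass \<equiv> LINT a:{0<..}|lborel. u0 a"
abbreviation "\<Lambda> \<equiv> \<alpha> / \<mu> * (SUP x\<in>{0..}. f_ricker x)"
abbreviation "\<delta>_minus \<equiv> exp (- (Linf_norm \<beta> * max initial_mass \<Lambda>))"

lemma AE_beta_le: "AE a in lborel. a > 0 \<longrightarrow> \<beta> a \<le> Linf_norm \<beta>"
  using AE_abs_le_Linf_norm[OF beta_bdd] by eventually_elim auto

sublocale bounded_kernel "\<lambda>a. \<beta> a * exp (- \<mu> * a)" "Linf_norm \<beta>"
proof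
  show "(\<lambda>a. \<beta> a * exp (- \<mu> * a)) \<in> borel_measurable lborel"
    using beta_meas by measurable
  show "AE a in lborel. a > 0 \<longrightarrow> 0 \<le> \<beta> a * exp (- \<mu> * a) \<and> \<beta> a * exp (- \<mu> * a) \<le> Linf_norm \<beta>"
    using beta_nonneg AE_beta_le
  proof eventually_elim
    case (elim a)
    show ?case
    proof
      assume "a > 0"
      moreover have "exp (- \<mu> * a) \<le> 1" using \<open>a > 0\<close> mu_pos by simp
      ultimately show "0 \<le> \<beta> a * exp (- \<mu> * a) \<and> \<beta> a * exp (- \<mu> * a) \<le> Linf_norm \<beta>"
        using elim by (auto intro: order_trans[OF mult_left_le])
    qed
  qed
qed

lemma initial_mass_nonneg: "0 \<le> initial_mass"
  unfolding set_lebesgue_integral_def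
  by (rule integral_nonneg_AE) (use u0_nonneg in \<open>eventually_elim, auto simp: indicator_def\<close>)

lemma AE_u0_translate_nonneg: "AE a in lborel. a - t > 0 \<longrightarrow> u0 (a - t) \<ge> 0"
  by (rule AE_lborel_translate[OF u0_nonneg])

lemma initial_input_nonneg:
  assumes t: "t \<ge> 0"
  shows "0 \<le> input t"
  unfolding initial_input_def set_lebesgue_integral_def
proof (rule integral_nonneg_AE)
  show "AE a in lborel. 0 \<le> indicator {t..} a *\<^sub>R (\<beta> a * exp (- \<mu> * t) * u0 (a - t))"
    using beta_nonneg AE_u0_translate_nonneg[of t] AE_lborel_singleton[of 0] AE_lborel_singleton[of t]
  proof eventually_elim
    case (elim a)
    then show ?case
      using t by (cases "a \<ge> t") (auto intro!: mult_nonneg_nonneg)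
  qed
qed

lemma initial_input_le:
  assumes t: "t \<ge> 0"
  shows "input t \<le> Linf_norm \<beta> * exp (- \<mu> * t) * initial_mass"
proof (cases "set_integrable lborel {t..} (\<lambda>a. \<beta> a * exp (- \<mu> * t) * u0 (a - t))")
  case True
  have "input t \<le> (LINT a:{t..}|lborel. (Linf_norm \<beta> * exp (- \<mu> * t)) * u0 (a - t))"
    unfolding initial_input_def
  proof (rule set_integral_mono_AE[OF True])
    show "set_integrable lborel {t..} (\<lambda>a. (Linf_norm \<beta> * exp (- \<mu> * t)) * u0 (a - t))"
      using set_integral_translate_Ioi(1)[OF u0_int, of t] by simp
    show "AE a\<in>{t..} in lborel. \<beta> a * exp (- \<mu> * t) * u0 (a - t) \<le> Linf_norm \<beta> * exp (- \<mu> * t) * u0 (a - t)"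
      using AE_beta_le AE_u0_translate_nonneg[of t] AE_lborel_singleton[of 0] AE_lborel_singleton[of t]
      by eventually_elim (use t in \<open>auto intro!: mult_right_mono\<close>)
  qed
  also have "\<dots> = Linf_norm \<beta> * exp (- \<mu> * t) * initial_mass"
    using set_integral_translate_Ioi(2)[OF u0_int, of t] by simp
  finally show ?thesis .
next
  case False
  then have "input t = 0"
    unfolding initial_input_def set_lebesgue_integral_def set_integrable_def
    by (rule not_integrable_integral_eq)
  then show ?thesis
    using Linf_norm_nonneg[OF beta_bdd] initial_mass_nonneg by simp
qed

end

locale ricker_solution = ricker_model +
  fixes b :: "real \<Rightarrow> real"
  assumes b_sol: "is_birth_rate (\<lambda>x. \<alpha> * f_ricker x) \<mu> \<beta> u0 b"
begin

abbreviation "conv \<equiv> volterra_conv (\<lambda>a. \<beta> a * exp (- \<mu> * a))"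

lemmas b_cont = is_birth_rateD(1)[OF b_sol]
lemmas b_eq = is_birth_rateD(2)[OF b_sol]

text \<open>Where b < 0 the Ricker nonlinearity is Lipschitz with a constant fixed by an a priori
  bound on b on [0, s], so the comparison principle applies to 0 and b.\<close>
lemma birth_rate_nonneg:
  assumes s: "s \<ge> 0"
  shows "0 \<le> b s"
proof -
  obtain B where "\<forall>y\<in>b ` {0..s}. norm y \<le> B"
    using compact_imp_bounded[OF compact_continuous_image[OF b_cont compact_Icc]]
    unfolding bounded_iff by blast
  then have B: "\<And>x. x \<in> {0..s} \<Longrightarrow> \<bar>b x\<bar> \<le> B" by auto
  define M where "M = Linf_norm \<beta> * B * s"
  have "(\<lambda>_. 0) s \<le> b s"
  proof (rule volterra_comparison[where L = "\<alpha> * exp M" and T = s and p = "\<lambda>_. 0" and q = b])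
    show "0 \<le> \<alpha> * exp M" using alpha_pos by simp
    show "s \<in> {0..s}" using s by simp
    fix t assume t: "t \<in> {0..s}" and neg: "b t < 0"
    define I where "I = input t + conv b t"
    have bt: "b t = \<alpha> * f_ricker I" using b_eq[of t] t by (simp add: I_def)
    then have "I < 0" using neg alpha_pos f_ricker_neg_iff[of I] by (auto simp: mult_less_0_iff)
    have "- I \<le> - conv b t" using initial_input_nonneg[of t] t by (simp add: I_def)
    moreover have "- conv b t \<le> M"
    proof -
      have "\<bar>conv b t\<bar> \<le> Linf_norm \<beta> * B * t"
        using t by (intro abs_conv_le b_cont) (auto intro: B)
      also have "\<dots> \<le> M"
        using t bound_nonneg B[of 0] s unfolding M_def by (intro mult_left_mono) auto
      finally show ?thesis by linarith
    qed
    ultimately have "- f_ricker I \<le> exp M * (- conv b t)"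
      using f_ricker_neg_le[of I M] \<open>I < 0\<close> by (smt (verit) exp_gt_zero mult_left_mono)
    then show "0 - b t \<le> \<alpha> * exp M * (conv (\<lambda>_. 0) t - conv b t)"
      using alpha_pos bt by (simp add: mult.assoc mult_left_mono)
  qed (use b_cont in auto)
  then show ?thesis by simp
qed

lemma birth_rate_le_upper_linear:
  assumes bp_sol: "is_birth_rate (\<lambda>x. \<alpha> * x) \<mu> \<beta> u0 bp" and s: "s \<ge> 0"
  shows "b s \<le> bp s"
proof (rule volterra_comparison[where L = \<alpha> and T = s and p = b and q = bp])
  show "0 \<le> \<alpha>" using alpha_pos by simp
  show "s \<in> {0..s}" using s by simp
  fix t assume t: "t \<in> {0..s}"
  have "b t \<le> \<alpha> * (input t + conv b t)"
    using b_eq[of t] t f_ricker_le_id alpha_pos by (simp add: mult_left_mono)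
  then show "b t - bp t \<le> \<alpha> * (conv b t - conv bp t)"
    using is_birth_rateD(2)[OF bp_sol, of t] t by (simp add: algebra_simps)
qed (use b_cont is_birth_rateD(1)[OF bp_sol] in auto)

lemma conv_birth_rate_nonneg: "t \<ge> 0 \<Longrightarrow> 0 \<le> conv b t"
  by (rule conv_nonneg[OF b_cont]) (auto intro: birth_rate_nonneg)

lemma birth_rate_le_Sup: "t \<ge> 0 \<Longrightarrow> b t \<le> \<alpha> * (SUP x\<in>{0..}. f_ricker x)"
  using b_eq[of t] alpha_pos f_ricker_le_Sup initial_input_nonneg conv_birth_rate_nonneg
  by (simp add: mult_left_mono)

lemma conv_birth_rate_le:
  assumes t: "t \<ge> 0"
  shows "conv b t \<le> Linf_norm \<beta> * \<Lambda> * (1 - exp (- \<mu> * t))"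
proof -
  define S where "S = \<alpha> * (SUP x\<in>{0..}. f_ricker x)"
  have "conv b t \<le> (LINT a:{0..t}|lborel. (Linf_norm \<beta> * S) * exp (- \<mu> * a))"
  proof (rule conv_le_set_integral[OF b_cont])
    show "set_integrable lborel {0..t} (\<lambda>a. (Linf_norm \<beta> * S) * exp (- \<mu> * a))"
      by (rule borel_integrable_atLeastAtMost') (intro continuous_intros)
    show "AE a in lborel. 0 < a \<and> a \<le> t \<longrightarrow>
        \<beta> a * exp (- \<mu> * a) * b (t - a) \<le> Linf_norm \<beta> * S * exp (- \<mu> * a)"
      using AE_beta_le
    proof eventually_elim
      case (elim a)
      show ?case
      proof
        assume a: "0 < a \<and> a \<le> t"
        then have "\<beta> a * b (t - a) \<le> Linf_norm \<beta> * S"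
          using elim birth_rate_le_Sup[of "t - a"] birth_rate_nonneg[of "t - a"]
            Linf_norm_nonneg[OF beta_bdd]
          by (intro mult_mono) (auto simp: S_def)
        then show "\<beta> a * exp (- \<mu> * a) * b (t - a) \<le> Linf_norm \<beta> * S * exp (- \<mu> * a)"
          by (simp add: algebra_simps mult_right_mono)
      qed
    qed
  qed
  also have "\<dots> = Linf_norm \<beta> * \<Lambda> * (1 - exp (- \<mu> * t))"
    using set_integral_exp_neg_Icc[OF mu_pos t] by (simp add: S_def)
  finally show ?thesis .
qed

lemma birth_input_le:
  assumes t: "t \<ge> 0"
  shows "input t + conv b t \<le> Linf_norm \<beta> * max initial_mass \<Lambda>"
proof -
  define e where "e = exp (- \<mu> * t)"
  have e: "0 \<le> e" "e \<le> 1" using t mu_pos by (auto simp: e_def)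
  have "input t + conv b t \<le> Linf_norm \<beta> * (e * initial_mass + (1 - e) * \<Lambda>)"
    using initial_input_le[OF t] conv_birth_rate_le[OF t] by (simp add: e_def algebra_simps)
  also have "\<dots> \<le> Linf_norm \<beta> * max initial_mass \<Lambda>"
  proof (rule mult_left_mono[OF _ Linf_norm_nonneg[OF beta_bdd]])
    have "e * initial_mass \<le> e * max initial_mass \<Lambda>" using e by (intro mult_left_mono) auto
    moreover have "(1 - e) * \<Lambda> \<le> (1 - e) * max initial_mass \<Lambda>" using e by (intro mult_left_mono) auto
    ultimately show "e * initial_mass + (1 - e) * \<Lambda> \<le> max initial_mass \<Lambda>"
      by (simp add: algebra_simps)
  qed
  finally show ?thesis .
qed

lemma linear_rate_le_birth_rate: "t \<ge> 0 \<Longrightarrow> \<alpha> * \<delta>_minus * (input t + conv b t) \<le> b t"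
  using b_eq[of t] alpha_pos initial_input_nonneg conv_birth_rate_nonneg birth_input_le
    f_ricker_ge_on_Icc[of "input t + conv b t" "Linf_norm \<beta> * max initial_mass \<Lambda>"]
  by (simp add: mult.assoc mult_left_mono)

lemma lower_linear_birth_rate_le:
  assumes bm_sol: "is_birth_rate (\<lambda>x. \<alpha> * \<delta>_minus * x) \<mu> \<beta> u0 bm" and s: "s \<ge> 0"
  shows "bm s \<le> b s"
proof (rule volterra_comparison[where L = "\<alpha> * \<delta>_minus" and T = s and p = bm and q = b])
  show "0 \<le> \<alpha> * \<delta>_minus" using alpha_pos by simp
  show "s \<in> {0..s}" using s by simp
  fix t assume t: "t \<in> {0..s}"
  show "bm t - b t \<le> \<alpha> * \<delta>_minus * (conv bm t - conv b t)"
    using is_birth_rateD(2)[OF bm_sol, of t] linear_rate_le_birth_rate[of t] t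
    by (simp add: algebra_simps)
qed (use b_cont is_birth_rateD(1)[OF bm_sol] in auto)

end

theorem theorem3p1:
  fixes \<mu> \<alpha> :: real and \<beta> u0 b bp bm :: "real \<Rightarrow> real"
  assumes mu_pos: "\<mu> > 0" and alpha_pos: "\<alpha> > 0"
    and beta_meas: "\<beta> \<in> borel_measurable lborel"
    and beta_nonneg: "AE a in lborel. a > 0 \<longrightarrow> \<beta> a \<ge> 0"
    and beta_bdd: "\<exists>C. AE a in lborel. a > 0 \<longrightarrow> \<bar>\<beta> a\<bar> \<le> C"
    and beta_norm: "(LINT a:{0..}|lborel. \<beta> a * exp (- \<mu> * a)) = 1"
    and u0_int: "set_integrable lborel {0<..} u0"
    and u0_nonneg: "AE a in lborel. a > 0 \<longrightarrow> u0 a \<ge> 0"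
    and b_sol: "is_birth_rate (\<lambda>x. \<alpha> * f_ricker x) \<mu> \<beta> u0 b"
    and bp_sol: "is_birth_rate (\<lambda>x. \<alpha> * 1 * x) \<mu> \<beta> u0 bp"
    and bm_sol: "is_birth_rate
           (\<lambda>x. \<alpha> * exp (- (Linf_norm \<beta> *
                 max (LINT a:{0<..}|lborel. u0 a) (\<alpha> / \<mu> * (SUP x\<in>{0..}. f_ricker x)))) * x)
           \<mu> \<beta> u0 bm"
  shows "\<forall>t\<ge>0. AE a in lborel. a \<ge> 0 \<longrightarrow>
           age_sol \<mu> u0 bm t a \<le> age_sol \<mu> u0 b t a \<and> age_sol \<mu> u0 b t a \<le> age_sol \<mu> u0 bp t a"
proof -
  interpret ricker_solution \<mu> \<alpha> \<beta> u0 b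
    using mu_pos alpha_pos beta_meas beta_nonneg beta_bdd u0_int u0_nonneg b_sol
    by unfold_locales
  have "bm s \<le> b s" if "s \<ge> 0" for s
    by (rule lower_linear_birth_rate_le[OF bm_sol that])
  moreover have "b s \<le> bp s" if "s \<ge> 0" for s
    by (rule birth_rate_le_upper_linear[OF bp_sol[unfolded mult_1_right] that])
  ultimately show ?thesis
    by (auto intro!: AE_I2 age_sol_mono)
qed

end
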